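(* Let $\mathcal{X}$ be a finite set of actions, $\mathcal{Y}$ a finite set of responses, $\mathcal{H}\subseteq \mathcal{Y}^{\mathcal{X}}$, and $\mathrm{cost}:\mathcal{X}\times\mathcal{Y}\to\mathbb{R}_+$. Let $f:2^{\mathcal{X}\times\mathcal{Y}}\to\mathbb{R}_+$, $Q>0$, $\eta>0$ be such that $f$ is monotone non-decreasing and submodular, $f(\emptyset)=0$, and for every $S\subseteq \mathcal{X}\times\mathcal{Y}$, $f(S)\ge Q-\eta$ implies $f(S)\ge Q$. Let $\alpha\ge 1$ and let $\mathcal{A}$ be an $\alpha$-approximate greedy algorithm for the utility function $u^f$. If $f$ is a learning objective for $\mathcal{H}$, then $$\mathrm{cost}(\mathcal{A}) \le r_{\mathrm{cost}}\cdot \alpha\,(\ln(Q/\eta)+1)\,\mathrm{OPT}.$$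
   Context: Interactive algorithms: the true (unknown) state is some $h^*\in\mathcal{H}$. An interactive algorithm $\mathcal{A}$ is a map that, given the set $S\subseteq\mathcal{X}\times\mathcal{Y}$ of action-response pairs observed so far, outputs either an action $\mathcal{A}(S)\in\mathcal{X}$ (which is then performed, yielding the pair $(x,h^*(x))$ added to $S$) or the symbol "terminate". $S^h[\mathcal{A}]$ denotes the set of pairs collected by $\mathcal{A}$ until termination when $h^*=h$. Performing action $x$ with response $y$ costs $\mathrm{cost}(x,y)$; $\mathrm{cost}(S)=\sum_{(x,y)\in S}\mathrm{cost}(x,y)$ and the worst-case cost is $\mathrm{cost}(\mathcal{A}):=\max_{h\in\mathcal{H}}\mathrm{cost}(S^h[\mathcal{A}])$. $\mathrm{OPT}:=\min_{\mathcal{A}}\mathrm{cost}(\mathcal{A})$, minimum over all interactive algorithms that satisfy $f(S^h[\mathcal{A}])\ge Q$ for all $h\in\mathcal{H}$ ($\mathrm{OPT}=\infty$ if none exists). Version space: $V(S)=\{h\in\mathcal{H}\mid \forall (x,y)\in S,\ y=h(x)\}$. For a set function $g$, $\delta_g(z\mid A):=g(A\cup\{z\})-g(A)$. The utility function is $u^f(x,S):=\min_{h\in V(S)} \frac{\delta_{\min(f,Q)}((x,h(x))\mid S)}{\mathrm{cost}(x,h(x))}$, where $\min(f,Q)$ is the function $S\mapsto\min(f(S),Q)$. An interactive algorithm $\mathcal{A}$ is an $\alpha$-approximate greedy algorithm for a utility $u:\mathcal{X}\times 2^{\mathcal{X}\times\mathcal{Y}}\to\mathbb{R}_+$ if for all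 $S$: if $f(S)\ge Q$ then $\mathcal{A}$ terminates on $S$, and otherwise $\mathcal{A}(S)\in\mathcal{X}$ with $u(\mathcal{A}(S),S)\ge \frac{1}{\alpha}\max_{x\in\mathcal{X}}u(x,S)$. $f$ is a learning objective for $\mathcal{H}$ if $f(S)=g(V(S))$ for some monotone non-increasing function $g$ (of subsets of $\mathcal{H}$). Second-smallest cost ratio: for $x\in\mathcal{X}$, $\phi(x)$ is the second-smallest value in the multiset $\{\mathrm{cost}(x,y)\mid y\in\mathcal{Y}\}$, and $r_{\mathrm{cost}}:=\max_{x\in\mathcal{X},y\in\mathcal{Y}}\frac{\mathrm{cost}(x,y)}{\phi(x)}$. *)

theory Defs
  imports Complex_Main "HOL-Library.Multiset" "HOL-Library.Extended_Real"
begin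

text \<open>Actions have type 'x, responses type 'y (both finite types).
 An interactive algorithm maps the observed set S to Some action or None (= terminate).\<close>

type_synonym ('x, 'y) ialg = "('x \<times> 'y) set \<Rightarrow> 'x option"

definition version_space :: "('x \<Rightarrow> 'y) set \<Rightarrow> ('x \<times> 'y) set \<Rightarrow> ('x \<Rightarrow> 'y) set" where
  "version_space H S = {h \<in> H. \<forall>(x, y) \<in> S. y = h x}"

definition set_cost :: "('x \<Rightarrow> 'y \<Rightarrow> real) \<Rightarrow> ('x \<times> 'y) set \<Rightarrow> real" where
  "set_cost cost S = (\<Sum>(x, y) \<in> S. cost x y)"

fun run :: "('x, 'y) ialg \<Rightarrow> ('x \<Rightarrow> 'y) \<Rightarrow> nat \<Rightarrow> ('x \<times> 'y) set" where
  "run A h 0 = {}"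
| "run A h (Suc n) = (case A (run A h n) of None \<Rightarrow> run A h n
                       | Some x \<Rightarrow> insert (x, h x) (run A h n))"

definition terminates :: "('x, 'y) ialg \<Rightarrow> ('x \<Rightarrow> 'y) \<Rightarrow> bool" where
  "terminates A h \<longleftrightarrow> (\<exists>n. A (run A h n) = None)"

text \<open>S^h[A]: the set collected by A until termination (meaningful when terminates A h).\<close>
definition collected :: "('x, 'y) ialg \<Rightarrow> ('x \<Rightarrow> 'y) \<Rightarrow> ('x \<times> 'y) set" where
  "collected A h = run A h (LEAST n. A (run A h n) = None)"

definition alg_cost :: "('x \<Rightarrow> 'y) set \<Rightarrow> ('x \<Rightarrow> 'y \<Rightarrow> real) \<Rightarrow> ('x, 'y) ialg \<Rightarrow> ereal" where
  "alg_cost H cost A =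
     (SUP h\<in>H. (if terminates A h then ereal (set_cost cost (collected A h)) else \<infinity>))"

definition OPT :: "('x \<Rightarrow> 'y) set \<Rightarrow> ('x \<Rightarrow> 'y \<Rightarrow> real) \<Rightarrow> (('x \<times> 'y) set \<Rightarrow> real) \<Rightarrow> real \<Rightarrow> ereal" where
  "OPT H cost f Q =
     (INF A\<in>{A. \<forall>h\<in>H. terminates A h \<and> f (collected A h) \<ge> Q}. alg_cost H cost A)"

text \<open>Utility u^f(x,S); for an inconsistent S (empty version space) we put 0
 (such S never arise, and the greedy condition is then trivially satisfied, as with the
 convention min over the empty set = +infinity).\<close>
definition utility :: "('x \<Rightarrow> 'y) set \<Rightarrow> ('x \<Rightarrow> 'y \<Rightarrow> real) \<Rightarrow> (('x \<times> 'y) set \<Rightarrow> real) \<Rightarrow> real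
                      \<Rightarrow> 'x \<Rightarrow> ('x \<times> 'y) set \<Rightarrow> real" where
  "utility H cost f Q x S =
     (if version_space H S = {} then 0
      else Min ((\<lambda>h. (min (f (insert (x, h x) S)) Q - min (f S) Q) / cost x (h x))
                 ` version_space H S))"

definition approx_greedy ::
  "('x::finite \<Rightarrow> 'y) set \<Rightarrow> ('x \<Rightarrow> 'y \<Rightarrow> real) \<Rightarrow> (('x \<times> 'y) set \<Rightarrow> real) \<Rightarrow> real \<Rightarrow> real
     \<Rightarrow> ('x, 'y) ialg \<Rightarrow> bool" where
  "approx_greedy H cost f Q \<alpha> A \<longleftrightarrow>
     (\<forall>S. (f S \<ge> Q \<longrightarrow> A S = None) \<and>
          (\<not> f S \<ge> Q \<longrightarrow> (\<exists>x. A S = Some x \<and>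
              utility H cost f Q x S \<ge> (1 / \<alpha>) * Max (range (\<lambda>x'. utility H cost f Q x' S)))))"

definition learning_objective :: "('x \<Rightarrow> 'y) set \<Rightarrow> (('x \<times> 'y) set \<Rightarrow> real) \<Rightarrow> bool" where
  "learning_objective H f \<longleftrightarrow>
     (\<exists>g :: ('x \<Rightarrow> 'y) set \<Rightarrow> real.
        (\<forall>A B. A \<subseteq> B \<longrightarrow> B \<subseteq> H \<longrightarrow> g B \<le> g A) \<and>
        (\<forall>S. f S = g (version_space H S)))"

definition submodular :: "('a set \<Rightarrow> real) \<Rightarrow> bool" where
  "submodular f \<longleftrightarrow> (\<forall>A B. f (A \<union> B) + f (A \<inter> B) \<le> f A + f B)"

definition phi :: "('x \<Rightarrow> 'y::finite \<Rightarrow> real) \<Rightarrow> 'x \<Rightarrow> real" where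
  "phi cost x = sorted_list_of_multiset (image_mset (cost x) (mset_set (UNIV :: 'y set))) ! 1"

definition r_cost :: "('x::finite \<Rightarrow> 'y::finite \<Rightarrow> real) \<Rightarrow> real" where
  "r_cost cost = Max {cost x y / phi cost x | x y. True}"

end

theory Submission
  imports Defs
begin

text \<open>
  Fix any algorithm B meeting the target Q with worst-case cost M and any consistent data S.
  An adversary answering each query of B with the response minimising the utility at S forces
  B to pay at least the deficit Q - min (f S) Q divided by r_cost times the largest utility at S:
  by submodularity, each answer gains at most that utility times its cost, and when the answer
  is inconsistent with the remaining hypotheses, either some hypothesis answers with cost at least
  the second-smallest cost phi, or all of them agree and the query carries no information.
  Hence every greedy step of cost c shrinks the deficit by the factor 1 - c / L with
  L = \<alpha> * r_cost * M, so after paying s the deficit is at most Q * exp (- s / L). Before the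
  last step the deficit exceeds \<eta>, which bounds the cost paid so far by L * ln (Q / \<eta>),
  and the last step costs at most L.
\<close>

subsection \<open>Runs of interactive algorithms\<close>

lemma run_subset_run_Suc: "run A h n \<subseteq> run A h (Suc n)"
  by (auto split: option.splits)

lemma run_mono: "n \<le> m \<Longrightarrow> run A h n \<subseteq> run A h m"
  by (induction m rule: dec_induct) (use run_subset_run_Suc in blast)+

lemma run_consistent: "(x, y) \<in> run A h n \<Longrightarrow> y = h x"
  by (induction n) (auto split: option.splits)

lemma in_version_space_run: "h \<in> H \<Longrightarrow> h \<in> version_space H (run A h n)"
  unfolding version_space_def by (auto dest: run_consistent)

lemma run_cong:
  assumes "\<And>x y. (x, y) \<in> run A h n \<Longrightarrow> h' x = y"
  shows "run A h' n = run A h n"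
  using assms
proof (induction n)
  case 0
  then show ?case by simp
next
  case (Suc n)
  then have IH: "run A h' n = run A h n"
    using run_subset_run_Suc by blast
  show ?case
  proof (cases "A (run A h n)")
    case None
    then show ?thesis using IH by simp
  next
    case (Some x)
    then have "h' x = h x" using Suc.prems by simp
    then show ?thesis using IH Some by simp
  qed
qed

lemma run_stable:
  assumes "A (run A h n) = None" "n \<le> m"
  shows "run A h m = run A h n"
  using assms(2) by (induction m rule: dec_induct) (use assms(1) in auto)

lemma collected_eq_run:
  assumes "A (run A h n) = None"
  shows "collected A h = run A h n"
proof -
  let ?k = "LEAST n. A (run A h n) = None"
  have "A (run A h ?k) = None" by (rule LeastI[of _ n]) (rule assms)
  moreover have "?k \<le> n" by (rule Least_le) (rule assms)
  ultimately show ?thesis unfolding collected_def using run_stable[of A h ?k n] by simp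
qed

lemma run_subset_collected:
  assumes "terminates A h"
  shows "run A h n \<subseteq> collected A h"
proof -
  obtain m where m: "A (run A h m) = None" using assms unfolding terminates_def by blast
  have "run A h n \<subseteq> run A h (max n m)" by (rule run_mono) simp
  also have "\<dots> = run A h m" by (rule run_stable[of A h m, OF m]) simp
  finally show ?thesis using collected_eq_run[of A h m, OF m] by simp
qed

text \<open>A terminating algorithm never repeats a query: otherwise its run would be stuck at a
  non-terminating state.\<close>
lemma terminates_run_Some_notin:
  assumes "terminates A h" "A (run A h n) = Some x"
  shows "(x, y) \<notin> run A h n"
proof
  assume "(x, y) \<in> run A h n"
  then have repeated: "(x, h x) \<in> run A h n" using run_consistent by metis
  have stuck: "run A h m = run A h n" if "n \<le> m" for m
    using that
  proof (induction m rule: dec_induct)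
    case (step m)
    then show ?case using assms(2) repeated by (simp add: insert_absorb)
  qed simp
  obtain m where m: "A (run A h m) = None" using assms(1) unfolding terminates_def by blast
  have "run A h m = run A h n"
  proof (cases "n \<le> m")
    case True
    then show ?thesis by (rule stuck)
  next
    case False
    then show ?thesis using run_stable[of A h m n, OF m] by simp
  qed
  then show False using m assms(2) by simp
qed

lemma terminates_query_subset_collected:
  assumes "terminates A h" "A (run A h n) = Some x"
  shows "insert (x, h x) (run A h n) \<subseteq> collected A h"
  using run_subset_collected[OF assms(1), of "Suc n"] assms(2) by simp

lemma run_eq_if_in_version_space:
  assumes "run A h n = T" "h' \<in> version_space H T"
  shows "run A h' n = T"
proof -
  have "\<And>x y. (x, y) \<in> run A h n \<Longrightarrow> h' x = y"
    using assms unfolding version_space_def by auto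
  then show ?thesis using run_cong assms(1) by metis
qed

lemma card_run_le:
  fixes h :: "'x::finite \<Rightarrow> 'y"
  shows "card (run A h n) \<le> card (UNIV :: 'x set)"
proof -
  have "run A h n \<subseteq> (\<lambda>x. (x, h x)) ` UNIV" using run_consistent by fastforce
  then have "card (run A h n) \<le> card ((\<lambda>x. (x, h x)) ` (UNIV :: 'x set))"
    by (intro card_mono) auto
  also have "\<dots> \<le> card (UNIV :: 'x set)" by (rule card_image_le) simp
  finally show ?thesis .
qed

lemma set_cost_insert:
  "finite S \<Longrightarrow> (x, y) \<notin> S \<Longrightarrow> set_cost c (insert (x, y) S) = set_cost c S + c x y"
  unfolding set_cost_def by simp

lemma set_cost_mono:
  assumes "\<And>x y. c x y \<ge> 0" "finite T" "S \<subseteq> T"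
  shows "set_cost c S \<le> set_cost c T"
  unfolding set_cost_def by (rule sum_mono2) (use assms in auto)

lemma set_cost_le_alg_cost:
  "h \<in> H \<Longrightarrow> terminates A h \<Longrightarrow> ereal (set_cost cost (collected A h)) \<le> alg_cost H cost A"
  unfolding alg_cost_def by (rule SUP_upper2) auto

lemma alg_cost_le:
  "(\<And>h. h \<in> H \<Longrightarrow> terminates A h \<and> set_cost cost (collected A h) \<le> M)
   \<Longrightarrow> alg_cost H cost A \<le> ereal M"
  unfolding alg_cost_def by (rule SUP_least) auto

subsection \<open>The second-smallest cost\<close>

context
  fixes cost :: "'x::finite \<Rightarrow> 'y::finite \<Rightarrow> real" and x :: 'x
  assumes card_responses: "card (UNIV :: 'y set) \<ge> 2"
begin

private definition "costs = sorted_list_of_multiset (image_mset (cost x) (mset_set (UNIV :: 'y set)))"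

private lemma mset_costs: "mset costs = image_mset (cost x) (mset_set UNIV)"
  unfolding costs_def by simp

private lemma length_costs: "length costs \<ge> 2"
  using card_responses size_mset[of costs] unfolding mset_costs by simp

private lemma phi_eq_nth_costs: "phi cost x = costs ! 1"
  unfolding phi_def costs_def by simp

lemma phi_attained: "\<exists>y. cost x y = phi cost x"
proof -
  have "costs ! 1 \<in> set costs" using length_costs by simp
  then show ?thesis unfolding phi_eq_nth_costs set_mset_mset[symmetric] mset_costs by auto
qed

text \<open>Only the smallest entry of the sorted list of costs lies below its second entry.\<close>
lemma cheaper_than_phi_unique:
  assumes "cost x y1 < phi cost x" "cost x y2 < phi cost x"
  shows "y1 = y2"
proof (rule ccontr)
  assume "y1 \<noteq> y2"
  define b where "b = costs ! 1"
  obtain a rest where costs: "costs = a # b # rest"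
    using length_costs unfolding b_def
    by (metis One_nat_def Suc_1 Suc_le_length_iff nth_Cons_0 nth_Cons_Suc)
  have "sorted costs" unfolding costs_def by simp
  then have "filter (\<lambda>v. v < b) (b # rest) = []"
    unfolding costs by (auto simp: filter_empty_conv not_less)
  then have "length (filter (\<lambda>v. v < b) costs) \<le> 1"
    unfolding costs by simp
  then have "size (filter_mset (\<lambda>v. v < b) (mset costs)) \<le> 1"
    by (metis mset_filter size_mset)
  then have "card {y. cost x y < b} \<le> 1"
    unfolding mset_costs filter_mset_image_mset by simp
  moreover have "card {y1, y2} \<le> card {y. cost x y < b}"
    using assms unfolding phi_eq_nth_costs b_def by (intro card_mono) auto
  ultimately show False using \<open>y1 \<noteq> y2\<close> by simp
qed

end

lemma phi_pos:
  fixes cost :: "'x::finite \<Rightarrow> 'y::finite \<Rightarrow> real"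
  assumes "card (UNIV :: 'y set) \<ge> 2" "\<And>x y. cost x y > 0"
  shows "phi cost x > 0"
  using phi_attained[OF assms(1)] assms(2) by metis

lemma cost_div_phi_le_r_cost:
  fixes cost :: "'x::finite \<Rightarrow> 'y::finite \<Rightarrow> real"
  shows "cost x y / phi cost x \<le> r_cost cost"
proof -
  have "{cost x y / phi cost x | x y. True} = (\<lambda>(x, y). cost x y / phi cost x) ` UNIV" by auto
  then show ?thesis unfolding r_cost_def by (intro Max_ge) auto
qed

lemma cost_le_r_cost_phi:
  fixes cost :: "'x::finite \<Rightarrow> 'y::finite \<Rightarrow> real"
  assumes "card (UNIV :: 'y set) \<ge> 2" "\<And>x y. cost x y > 0"
  shows "cost x y \<le> r_cost cost * phi cost x"
  using cost_div_phi_le_r_cost[of cost x y] phi_pos[where cost=cost and x=x, OF assms] by (simp add: divide_le_eq)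

lemma r_cost_ge_1:
  fixes cost :: "'x::finite \<Rightarrow> 'y::finite \<Rightarrow> real"
  assumes "card (UNIV :: 'y set) \<ge> 2" "\<And>x y. cost x y > 0"
  shows "r_cost cost \<ge> 1"
proof -
  obtain x :: 'x and y where "cost x y = phi cost x" using phi_attained[OF assms(1)] by blast
  then show ?thesis
    using cost_div_phi_le_r_cost[of cost x y] phi_pos[where cost=cost and x=x, OF assms] by simp
qed

lemma version_space_insert:
  "version_space H (insert (x, y) S) = {h \<in> version_space H S. h x = y}"
  unfolding version_space_def by auto

lemma version_space_Un:
  "version_space H (S \<union> T) = version_space H S \<inter> version_space H T"
  unfolding version_space_def by auto

lemma version_space_subset: "version_space H S \<subseteq> H"
  unfolding version_space_def by auto

lemma learning_objective_cong:
  "learning_objective H f \<Longrightarrow> version_space H S = version_space H T \<Longrightarrow> f S = f T"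
  unfolding learning_objective_def by metis

lemma learning_objective_inconsistent:
  assumes "learning_objective H f" "version_space H T = {}"
  shows "f S \<le> f T"
  using assms version_space_subset[of H S] unfolding learning_objective_def by force

lemma truncated_gain_antimono:
  fixes f :: "'a set \<Rightarrow> real"
  assumes "mono f" "submodular f" "S \<subseteq> T"
  shows "min (f (insert e T)) Q - min (f T) Q \<le> min (f (insert e S)) Q - min (f S) Q"
proof (cases "e \<in> T")
  case True
  have "f S \<le> f (insert e S)" using assms(1) by (auto intro: monoD)
  then show ?thesis using True by (simp add: insert_absorb min_def)
next
  case False
  have "f (T \<union> insert e S) + f (T \<inter> insert e S) \<le> f T + f (insert e S)"
    using assms(2) unfolding submodular_def by blast
  moreover have "T \<union> insert e S = insert e T" "T \<inter> insert e S = S"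
    using assms(3) False by auto
  moreover have "f S \<le> f T" "f T \<le> f (insert e T)" "f S \<le> f (insert e S)"
    using assms(1,3) by (auto intro: monoD)
  ultimately show ?thesis by (simp add: min_def)
qed

lemma utility_attained:
  fixes H :: "('x::finite \<Rightarrow> 'y::finite) set"
  assumes "version_space H S \<noteq> {}" "\<And>x y. cost x y > 0"
  obtains h where "h \<in> version_space H S"
    "utility H cost f Q x S * cost x (h x) = min (f (insert (x, h x) S)) Q - min (f S) Q"
proof -
  let ?ratio = "\<lambda>h. (min (f (insert (x, h x) S)) Q - min (f S) Q) / cost x (h x)"
  have "utility H cost f Q x S \<in> ?ratio ` version_space H S"
    unfolding utility_def using assms(1) by (simp add: Min_in)
  then obtain h where "h \<in> version_space H S" "utility H cost f Q x S = ?ratio h" by blast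
  moreover have "cost x (h x) \<noteq> 0" using assms(2) less_irrefl by metis
  ultimately show ?thesis using that by simp
qed

lemma utility_le_gain:
  fixes H :: "('x::finite \<Rightarrow> 'y::finite) set"
  assumes "h \<in> version_space H S" "\<And>x y. cost x y > 0"
  shows "utility H cost f Q x S * cost x (h x) \<le> min (f (insert (x, h x) S)) Q - min (f S) Q"
proof -
  have "utility H cost f Q x S \<le> (min (f (insert (x, h x) S)) Q - min (f S) Q) / cost x (h x)"
    unfolding utility_def using assms(1) by (auto intro: Min_le)
  then show ?thesis using assms(2)[of x "h x"] by (simp add: le_divide_eq)
qed

lemma utility_nonneg:
  fixes H :: "('x::finite \<Rightarrow> 'y::finite) set"
  assumes "mono f" "\<And>x y. cost x y > 0"
  shows "utility H cost f Q x S \<ge> 0"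
proof (cases "version_space H S = {}")
  case False
  then obtain h where "utility H cost f Q x S * cost x (h x)
      = min (f (insert (x, h x) S)) Q - min (f S) Q"
    using utility_attained assms(2) by metis
  moreover have "f S \<le> f (insert (x, h x) S)" using assms(1) by (auto intro: monoD)
  ultimately have "utility H cost f Q x S * cost x (h x) \<ge> 0" by (simp add: min_def)
  then show ?thesis using assms(2)[of x "h x"] by (simp add: zero_le_mult_iff)
qed (simp add: utility_def)

definition max_utility ::
  "('x::finite \<Rightarrow> 'y) set \<Rightarrow> ('x \<Rightarrow> 'y \<Rightarrow> real) \<Rightarrow> (('x \<times> 'y) set \<Rightarrow> real) \<Rightarrow> real
     \<Rightarrow> ('x \<times> 'y) set \<Rightarrow> real" where
  "max_utility H cost f Q S = Max (range (\<lambda>x. utility H cost f Q x S))"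

lemma utility_le_max_utility: "utility H cost f Q x S \<le> max_utility H cost f Q S"
  unfolding max_utility_def by (intro Max_ge) auto

lemma max_utility_nonneg:
  fixes H :: "('x::finite \<Rightarrow> 'y::finite) set"
  assumes "mono f" "\<And>x y. cost x y > 0"
  shows "max_utility H cost f Q S \<ge> 0"
  using utility_nonneg[OF assms] utility_le_max_utility by (rule order.trans)

lemma approx_greedy_None_iff:
  "approx_greedy H cost f Q \<alpha> A \<Longrightarrow> A S = None \<longleftrightarrow> Q \<le> f S"
  unfolding approx_greedy_def by (metis option.distinct(1))

lemma approx_greedy_utility:
  assumes "approx_greedy H cost f Q \<alpha> A" "A S = Some x"
  shows "max_utility H cost f Q S / \<alpha> \<le> utility H cost f Q x S"
proof -
  have "\<not> Q \<le> f S" using approx_greedy_None_iff[OF assms(1), of S] assms(2) by simp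
  then show ?thesis
    using assms unfolding approx_greedy_def max_utility_def
    by (metis option.inject divide_inverse_commute inverse_eq_divide)
qed

subsection \<open>The adversary bound\<close>

context
  fixes H :: "('x::finite \<Rightarrow> 'y::finite) set"
    and cost :: "'x \<Rightarrow> 'y \<Rightarrow> real"
    and f :: "('x \<times> 'y) set \<Rightarrow> real"
    and Q :: real and B :: "('x, 'y) ialg" and S :: "('x \<times> 'y) set"
  assumes card_responses: "card (UNIV :: 'y set) \<ge> 2"
    and cost_pos: "\<And>x y. cost x y > 0"
    and f_mono: "mono f" and f_submodular: "submodular f"
    and learning: "learning_objective H f"
    and B_valid: "\<forall>h\<in>H. terminates B h \<and> Q \<le> f (collected B h)"
    and S_consistent: "version_space H S \<noteq> {}"
begin

private abbreviation "R \<equiv> r_cost cost * max_utility H cost f Q S"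

private definition potential :: "('x \<times> 'y) set \<Rightarrow> real" where
  "potential T = Q - min (f (S \<union> T)) Q + R * set_cost cost T"

private lemma max_utility_S_nonneg: "max_utility H cost f Q S \<ge> 0"
  by (rule max_utility_nonneg[where cost = cost, OF f_mono cost_pos])

private lemma max_utility_le_R: "max_utility H cost f Q S \<le> R"
  using r_cost_ge_1[where cost = cost, OF card_responses cost_pos] max_utility_S_nonneg
  by (simp add: mult_le_cancel_right1)

private lemma R_nonneg: "R \<ge> 0"
  using max_utility_le_R max_utility_S_nonneg by linarith

private lemma inconsistent_reaches_Q:
  assumes "version_space H T = {}"
  shows "Q \<le> f T"
proof -
  obtain h where "h \<in> H" using S_consistent version_space_subset by blast
  then have "Q \<le> f (collected B h)" using B_valid by blast
  also have "\<dots> \<le> f T" by (rule learning_objective_inconsistent[OF learning assms])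
  finally show ?thesis .
qed

text \<open>The adversary answers x as the hypothesis attaining the minimum in the utility at S;
  by submodularity this answer gains even less after further data.\<close>
private lemma adversary_answer:
  "\<exists>y. \<forall>T. min (f (insert (x, y) (S \<union> T))) Q - min (f (S \<union> T)) Q
            \<le> max_utility H cost f Q S * cost x y"
proof -
  obtain h where h: "utility H cost f Q x S * cost x (h x) = min (f (insert (x, h x) S)) Q - min (f S) Q"
    using utility_attained[where cost = cost, OF S_consistent cost_pos] by metis
  have "min (f (insert (x, h x) (S \<union> T))) Q - min (f (S \<union> T)) Q
        \<le> max_utility H cost f Q S * cost x (h x)" for T
  proof -
    have "min (f (insert (x, h x) (S \<union> T))) Q - min (f (S \<union> T)) Q
          \<le> utility H cost f Q x S * cost x (h x)"
      unfolding h by (rule truncated_gain_antimono[OF f_mono f_submodular]) auto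
    also have "\<dots> \<le> max_utility H cost f Q S * cost x (h x)"
      using utility_le_max_utility cost_pos[of x "h x"] by (intro mult_right_mono) auto
    finally show ?thesis .
  qed
  then show ?thesis by blast
qed

private lemma adversary_step:
  assumes consistent: "version_space H (S \<union> T) \<noteq> {}"
    and fresh: "\<And>y. (x, y) \<notin> T"
    and queried: "\<And>h. h \<in> version_space H (S \<union> T) \<Longrightarrow> insert (x, h x) T \<subseteq> collected B h"
  shows "(\<exists>h\<in>version_space H (S \<union> T). potential T \<le> R * set_cost cost (collected B h))
    \<or> (\<exists>y. version_space H (S \<union> insert (x, y) T) \<noteq> {}
           \<and> potential T \<le> potential (insert (x, y) T))"
proof -
  let ?W = "version_space H (S \<union> T)"
  have cost_insert: "set_cost cost (insert (x, y) T) = set_cost cost T + cost x y" for y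
    using set_cost_insert[OF _ fresh] by simp
  have W_insert: "version_space H (S \<union> insert (x, y) T) = {h \<in> ?W. h x = y}" for y
    using version_space_insert[of H x y "S \<union> T"] by simp
  obtain y where gain: "min (f (insert (x, y) (S \<union> T))) Q - min (f (S \<union> T)) Q
                        \<le> max_utility H cost f Q S * cost x y"
    using adversary_answer by blast
  show ?thesis
  proof (cases "\<exists>h\<in>?W. h x = y")
    case True
    have "max_utility H cost f Q S * cost x y \<le> R * cost x y"
      using max_utility_le_R cost_pos[of x y] by (simp add: mult_right_mono)
    then have "potential T \<le> potential (insert (x, y) T)"
      using gain unfolding potential_def cost_insert by (simp add: algebra_simps)
    then show ?thesis using True W_insert by auto
  next
    case False
    then have "Q \<le> f (insert (x, y) (S \<union> T))"
      using inconsistent_reaches_Q W_insert by simp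
    then have "Q - min (f (S \<union> T)) Q \<le> max_utility H cost f Q S * cost x y"
      using gain by simp
    also have "\<dots> \<le> max_utility H cost f Q S * (r_cost cost * phi cost x)"
      using cost_le_r_cost_phi[where cost = cost, OF card_responses cost_pos] max_utility_S_nonneg
      by (rule mult_left_mono)
    finally have deficit: "Q - min (f (S \<union> T)) Q \<le> R * phi cost x"
      by (simp add: algebra_simps)
    show ?thesis
    proof (cases "\<exists>h\<in>?W. phi cost x \<le> cost x (h x)")
      case True
      then obtain h where h: "h \<in> ?W" "phi cost x \<le> cost x (h x)" by blast
      have "set_cost cost T + cost x (h x) \<le> set_cost cost (collected B h)"
        using set_cost_mono[where c = cost, OF less_imp_le[OF cost_pos] _ queried[OF h(1)]] cost_insert by simp
      then have "phi cost x + set_cost cost T \<le> set_cost cost (collected B h)" using h(2) by simp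
      then have "R * phi cost x + R * set_cost cost T \<le> R * set_cost cost (collected B h)"
        using R_nonneg by (metis distrib_left mult_left_mono)
      then have "potential T \<le> R * set_cost cost (collected B h)"
        using deficit unfolding potential_def by linarith
      then show ?thesis using h(1) by blast
    next
      case False
      txt \<open>All remaining hypotheses answer x below phi, hence identically: the query is
        uninformative and the adversary lets B pay for it.\<close>
      obtain h where h: "h \<in> ?W" using consistent by blast
      have "h' x = h x" if "h' \<in> ?W" for h'
        using cheaper_than_phi_unique[OF card_responses] False that h by (meson not_le)
      then have same: "version_space H (S \<union> insert (x, h x) T) = ?W"
        using W_insert by auto
      then have "f (S \<union> insert (x, h x) T) = f (S \<union> T)"
        by (rule learning_objective_cong[OF learning])
      then have "potential T \<le> potential (insert (x, h x) T)"
        unfolding potential_def cost_insert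
        using R_nonneg cost_pos[of x "h x"] by (simp add: distrib_left)
      then show ?thesis using same h by auto
    qed
  qed
qed

text \<open>B produces the transcript T on every hypothesis consistent with S and T, so the adversary
  can keep the potential of the transcript below the final cost of B.\<close>
private lemma adversary:
  assumes "h \<in> H" "run B h k = T" "version_space H (S \<union> T) \<noteq> {}"
  shows "\<exists>h'\<in>version_space H (S \<union> T). potential T \<le> R * set_cost cost (collected B h')"
  using assms
proof (induction "card (UNIV :: 'x set) - card T" arbitrary: T h k rule: less_induct)
  case less
  let ?W = "version_space H (S \<union> T)"
  have run_W: "run B h' k = T" if "h' \<in> ?W" for h'
    using run_eq_if_in_version_space[OF less.prems(2)] that version_space_Un by blast
  have terminates_W: "terminates B h'" if "h' \<in> ?W" for h'
    using B_valid that version_space_subset by blast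
  obtain h0 where h0: "h0 \<in> ?W" using less.prems(3) by blast
  show ?case
  proof (cases "B T")
    case None
    then have "collected B h0 = T" using collected_eq_run[of B h0 k] run_W[OF h0] by simp
    moreover have "Q \<le> f (collected B h0)" using B_valid h0 version_space_subset by blast
    moreover have "f T \<le> f (S \<union> T)" using f_mono by (auto intro: monoD)
    ultimately show ?thesis using h0 unfolding potential_def by auto
  next
    case (Some x)
    have fresh: "(x, y) \<notin> T" for y
      using terminates_run_Some_notin[OF terminates_W[OF h0], of k] run_W[OF h0] Some by simp
    have queried: "insert (x, h' x) T \<subseteq> collected B h'" if "h' \<in> ?W" for h'
      using terminates_query_subset_collected[OF terminates_W[OF that], of k] run_W[OF that] Some
      by simp
    have run_Suc: "run B h' (Suc k) = insert (x, h' x) T" if "h' \<in> ?W" for h'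
      using run_W[OF that] Some by simp
    from adversary_step[OF less.prems(3) fresh queried]
    show ?thesis
    proof
      assume "\<exists>h'\<in>?W. potential T \<le> R * set_cost cost (collected B h')"
      then show ?thesis .
    next
      assume "\<exists>y. version_space H (S \<union> insert (x, y) T) \<noteq> {}
                  \<and> potential T \<le> potential (insert (x, y) T)"
      then obtain y h' where h': "h' \<in> version_space H (S \<union> insert (x, y) T)"
        and potential: "potential T \<le> potential (insert (x, y) T)" by blast
      have h'_W: "h' \<in> ?W" and y: "h' x = y"
        using h' version_space_insert[of H x y "S \<union> T"] by auto
      have "card (insert (x, y) T) = Suc (card T)" using fresh by simp
      moreover have "card (insert (x, y) T) \<le> card (UNIV :: 'x set)"
        using card_run_le[of B h' "Suc k"] run_Suc[OF h'_W] y by simp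
      ultimately have "card (UNIV :: 'x set) - card (insert (x, y) T)
                       < card (UNIV :: 'x set) - card T" by simp
      moreover have "h' \<in> H" using h'_W version_space_subset by blast
      ultimately obtain h'' where "h'' \<in> version_space H (S \<union> insert (x, y) T)"
          "potential (insert (x, y) T) \<le> R * set_cost cost (collected B h'')"
        using less.hyps[of "insert (x, y) T" h' "Suc k"] run_Suc[OF h'_W] y h' by blast
      moreover have "version_space H (S \<union> insert (x, y) T) \<subseteq> ?W"
        using version_space_insert[of H x y "S \<union> T"] by auto
      ultimately show ?thesis using potential by (meson order.trans subsetD)
    qed
  qed
qed

lemma deficit_le_r_cost_max_utility_cost:
  assumes "\<forall>h\<in>H. set_cost cost (collected B h) \<le> M"
  shows "Q - min (f S) Q \<le> r_cost cost * max_utility H cost f Q S * M"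
proof -
  obtain h where "h \<in> H" using S_consistent version_space_subset by blast
  then obtain h' where h': "h' \<in> version_space H S" "potential {} \<le> R * set_cost cost (collected B h')"
    using adversary[of h 0 "{}"] S_consistent by auto
  have "R * set_cost cost (collected B h') \<le> R * M"
    using h'(1) assms R_nonneg version_space_subset by (intro mult_left_mono) auto
  then show ?thesis using h'(2) unfolding potential_def by (simp add: set_cost_def)
qed

end

subsection \<open>Analysis of the approximate greedy algorithm\<close>

context
  fixes H :: "('x::finite \<Rightarrow> 'y::finite) set"
    and cost :: "'x \<Rightarrow> 'y \<Rightarrow> real"
    and f :: "('x \<times> 'y) set \<Rightarrow> real"
    and Q \<eta> \<alpha> M :: real and A :: "('x, 'y) ialg" and h :: "'x \<Rightarrow> 'y"
  assumes card_responses: "card (UNIV :: 'y set) \<ge> 2"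
    and cost_pos: "\<And>x y. cost x y > 0"
    and f_mono: "mono f" and f_empty: "f {} = 0"
    and Q_pos: "Q > 0" and eta_pos: "\<eta> > 0"
    and gap: "\<And>S. f S \<ge> Q - \<eta> \<Longrightarrow> f S \<ge> Q"
    and alpha: "\<alpha> \<ge> 1"
    and greedy: "approx_greedy H cost f Q \<alpha> A"
    and h_in_H: "h \<in> H"
    and deficit_bound: "\<And>S. version_space H S \<noteq> {}
      \<Longrightarrow> Q - min (f S) Q \<le> r_cost cost * max_utility H cost f Q S * M"
begin

private abbreviation "G n \<equiv> run A h n"

private definition "deficit n = Q - min (f (G n)) Q"

private definition "step_cost n = set_cost cost (G (Suc n)) - set_cost cost (G n)"

private definition "L = \<alpha> * r_cost cost * M"

private lemma h_consistent: "h \<in> version_space H (G n)"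
  by (rule in_version_space_run[OF h_in_H])

private lemma r_cost_ge_1': "r_cost cost \<ge> 1"
  by (rule r_cost_ge_1[where cost = cost, OF card_responses cost_pos])

private lemma deficit_le: "deficit n \<le> r_cost cost * max_utility H cost f Q (G n) * M"
  unfolding deficit_def using deficit_bound h_consistent by blast

private lemma M_pos: "M > 0"
proof (rule ccontr)
  assume "\<not> M > 0"
  moreover have "r_cost cost * max_utility H cost f Q (G 0) \<ge> 0"
    using r_cost_ge_1' max_utility_nonneg[where cost = cost, OF f_mono cost_pos] by simp
  ultimately have "deficit 0 \<le> 0"
    using deficit_le[of 0] mult_nonneg_nonpos[of _ M] by (meson not_less order.trans)
  then show False using f_empty Q_pos unfolding deficit_def by simp
qed

private lemma L_pos: "L > 0"
  unfolding L_def using alpha r_cost_ge_1' M_pos by simp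

private lemma greedy_gain:
  assumes "A (G n) = Some x"
  shows "deficit n * cost x (h x) / L \<le> min (f (G (Suc n))) Q - min (f (G n)) Q"
proof -
  have "deficit n / L \<le> r_cost cost * max_utility H cost f Q (G n) * M / L"
    using deficit_le L_pos by (simp add: divide_right_mono)
  also have "\<dots> = max_utility H cost f Q (G n) / \<alpha>"
    unfolding L_def using r_cost_ge_1' M_pos alpha by (simp add: field_simps)
  also have "\<dots> \<le> utility H cost f Q x (G n)"
    by (rule approx_greedy_utility[OF greedy assms])
  finally have "deficit n / L \<le> utility H cost f Q x (G n)" .
  then have "deficit n / L * cost x (h x) \<le> utility H cost f Q x (G n) * cost x (h x)"
    using cost_pos[of x "h x"] by (intro mult_right_mono) simp_all
  also have "\<dots> \<le> min (f (insert (x, h x) (G n))) Q - min (f (G n)) Q"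
    by (rule utility_le_gain[OF h_consistent cost_pos])
  finally show ?thesis using assms by simp
qed

private lemma greedy_Some_notin:
  assumes "A (G n) = Some x"
  shows "(x, h x) \<notin> G n"
proof
  assume "(x, h x) \<in> G n"
  then have "G (Suc n) = G n" using assms by (simp add: insert_absorb)
  moreover have "deficit n > 0"
    using approx_greedy_None_iff[OF greedy, of "G n"] assms unfolding deficit_def by simp
  then have "deficit n * cost x (h x) / L > 0" using cost_pos[of x "h x"] L_pos by simp
  ultimately show False using greedy_gain[OF assms] by simp
qed

private lemma greedy_terminates: "terminates A h"
proof (rule ccontr)
  assume "\<not> terminates A h"
  then have "A (G n) \<noteq> None" for n unfolding terminates_def by simp
  then have "card (G n) = n" for n
    by (induction n) (auto split: option.splits simp: greedy_Some_notin)
  then show False using card_run_le[of A h "Suc (card (UNIV :: 'x set))"] by (simp del: run.simps)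
qed

private lemma deficit_Suc_le: "deficit (Suc n) \<le> deficit n * (1 - step_cost n / L)"
proof (cases "A (G n)")
  case None
  then show ?thesis unfolding step_cost_def deficit_def by simp
next
  case (Some x)
  then have "step_cost n = cost x (h x)"
    unfolding step_cost_def using set_cost_insert[OF _ greedy_Some_notin[OF Some]] by simp
  then show ?thesis
    using greedy_gain[OF Some] unfolding deficit_def by (simp add: algebra_simps)
qed

private lemma deficit_le_exp: "deficit n \<le> Q * exp (- set_cost cost (G n) / L)"
proof (induction n)
  case 0
  then show ?case using Q_pos f_empty by (simp add: deficit_def set_cost_def)
next
  case (Suc n)
  have "deficit n \<ge> 0" unfolding deficit_def by simp
  then have "deficit (Suc n) \<le> deficit n * exp (- (step_cost n / L))"
    using deficit_Suc_le[of n] exp_ge_add_one_self[of "- (step_cost n / L)"]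
    by (smt (verit) mult_left_mono)
  also have "\<dots> \<le> Q * exp (- set_cost cost (G n) / L) * exp (- (step_cost n / L))"
    using Suc.IH by (simp add: mult_right_mono)
  also have "\<dots> = Q * exp (- set_cost cost (G (Suc n)) / L)"
    unfolding step_cost_def mult.assoc exp_add[symmetric] by (simp add: diff_divide_distrib)
  finally show ?case .
qed

lemma approx_greedy_cost_le:
  "terminates A h \<and> set_cost cost (collected A h) \<le> r_cost cost * \<alpha> * (ln (Q / \<eta>) + 1) * M"
proof -
  obtain k where stop: "A (G k) = None" and running: "\<And>m. m < k \<Longrightarrow> A (G m) \<noteq> None"
    using greedy_terminates exists_least_iff[of "\<lambda>n. A (G n) = None"]
    unfolding terminates_def by blast
  have "k \<noteq> 0"
  proof
    assume "k = 0"
    then show False using stop approx_greedy_None_iff[OF greedy, of "{}"] f_empty Q_pos by simp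
  qed
  then obtain j where k: "k = Suc j" using not0_implies_Suc by blast
  have "f (G j) < Q - \<eta>"
    using running[of j] approx_greedy_None_iff[OF greedy, of "G j"] gap[of "G j"] k by force
  then have deficit_j: "\<eta> < deficit j" unfolding deficit_def by simp
  have "0 \<le> deficit (Suc j)" unfolding deficit_def by simp
  then have "0 \<le> deficit j * (1 - step_cost j / L)"
    using deficit_Suc_le[of j] by linarith
  then have last_step: "step_cost j \<le> L"
    using deficit_j eta_pos L_pos by (simp add: zero_le_mult_iff)
  have "ln \<eta> < ln (Q * exp (- set_cost cost (G j) / L))"
    using deficit_j deficit_le_exp[of j] eta_pos by simp
  then have "set_cost cost (G j) / L < ln (Q / \<eta>)"
    using Q_pos eta_pos by (simp add: ln_mult ln_div)
  then have before_last: "set_cost cost (G j) \<le> L * ln (Q / \<eta>)"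
    using L_pos by (simp add: pos_divide_less_eq mult.commute)
  have "set_cost cost (collected A h) = set_cost cost (G j) + step_cost j"
    using collected_eq_run[of A h k, OF stop] k unfolding step_cost_def by simp
  also have "\<dots> \<le> L * (ln (Q / \<eta>) + 1)"
    using before_last last_step by (simp add: distrib_left)
  finally show ?thesis using greedy_terminates unfolding L_def by (simp add: algebra_simps)
qed

end

subsection \<open>Comparison with the optimum\<close>

lemma le_ereal_mult_INF:
  fixes x :: ereal
  assumes "c > 0" "\<And>i. i \<in> I \<Longrightarrow> x \<le> ereal c * F i"
  shows "x \<le> ereal c * (INF i\<in>I. F i)"
proof -
  have inverse: "ereal c * ereal (1 / c) = 1" using assms(1) by (simp add: one_ereal_def)
  have "x * ereal (1 / c) \<le> (INF i\<in>I. F i)"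
  proof (rule INF_greatest)
    fix i assume "i \<in> I"
    then have "x * ereal (1 / c) \<le> ereal c * F i * ereal (1 / c)"
      using assms by (intro ereal_mult_right_mono) auto
    also have "\<dots> = F i" using inverse by (metis mult.commute mult.left_commute mult_1_right)
    finally show "x * ereal (1 / c) \<le> F i" .
  qed
  then have "ereal c * (x * ereal (1 / c)) \<le> ereal c * (INF i\<in>I. F i)"
    using assms(1) by (intro ereal_mult_left_mono) auto
  then show ?thesis using inverse by (metis mult.left_commute mult_1_right)
qed

lemma approximation_factor_pos:
  fixes cost :: "'x::finite \<Rightarrow> 'y::finite \<Rightarrow> real"
  assumes "card (UNIV :: 'y set) \<ge> 2" "\<And>x y. cost x y > 0"
    and "f {} = 0" "Q > 0" "\<eta> > 0" "\<And>S. f S \<ge> Q - \<eta> \<Longrightarrow> f S \<ge> Q" "\<alpha> \<ge> 1"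
  shows "r_cost cost * \<alpha> * (ln (Q / \<eta>) + 1) > 0"
proof -
  have "\<eta> < Q"
  proof (rule ccontr)
    assume "\<not> \<eta> < Q"
    then show False using assms(3,4) assms(6)[of "{}"] by simp
  qed
  then have "ln (Q / \<eta>) > 0" using assms(5) by simp
  then show ?thesis using r_cost_ge_1[where cost = cost, OF assms(1,2)] assms(7) by simp
qed

lemma approx_greedy_competitive:
  fixes H :: "('x::finite \<Rightarrow> 'y::finite) set"
  assumes card_responses: "card (UNIV :: 'y set) \<ge> 2"
    and cost_pos: "\<And>x y. cost x y > 0"
    and f_mono: "mono f" and f_submodular: "submodular f" and f_empty: "f {} = 0"
    and Q_pos: "Q > 0" and eta_pos: "\<eta> > 0"
    and gap: "\<And>S. f S \<ge> Q - \<eta> \<Longrightarrow> f S \<ge> Q"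
    and alpha: "\<alpha> \<ge> 1"
    and greedy: "approx_greedy H cost f Q \<alpha> A"
    and learning: "learning_objective H f"
    and B_valid: "\<forall>h\<in>H. terminates B h \<and> Q \<le> f (collected B h)"
  shows "alg_cost H cost A \<le> ereal (r_cost cost * \<alpha> * (ln (Q / \<eta>) + 1)) * alg_cost H cost B"
proof (cases "H = {}")
  case True
  then show ?thesis by (simp add: alg_cost_def)
next
  case False
  then obtain h0 where "h0 \<in> H" by blast
  then have B_lower: "ereal (set_cost cost (collected B h)) \<le> alg_cost H cost B" if "h \<in> H" for h
    using set_cost_le_alg_cost B_valid that by blast
  have factor_pos: "r_cost cost * \<alpha> * (ln (Q / \<eta>) + 1) > 0"
    by (rule approximation_factor_pos[where cost = cost and f = f, OF card_responses cost_pos f_empty Q_pos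
          eta_pos gap alpha])
  show ?thesis
  proof (cases "alg_cost H cost B")
    case (real M)
    then have "\<forall>h\<in>H. set_cost cost (collected B h) \<le> M" using B_lower by simp
    then have "Q - min (f S) Q \<le> r_cost cost * max_utility H cost f Q S * M"
      if "version_space H S \<noteq> {}" for S
      using deficit_le_r_cost_max_utility_cost[where cost = cost, OF card_responses cost_pos f_mono
          f_submodular learning B_valid that] by blast
    then have "alg_cost H cost A \<le> ereal (r_cost cost * \<alpha> * (ln (Q / \<eta>) + 1) * M)"
      using approx_greedy_cost_le[where cost = cost, OF card_responses cost_pos f_mono f_empty Q_pos
          eta_pos gap alpha greedy]
      by (intro alg_cost_le) blast
    then show ?thesis using real by simp
  next
    case PInf
    have "ereal c * \<infinity> = \<infinity>" if "c > 0" for c using that by simp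
    from this[OF factor_pos] show ?thesis using PInf by (simp del: times_ereal.simps)
  next
    case MInf
    then show ?thesis using B_lower[OF \<open>h0 \<in> H\<close>] by simp
  qed
qed

theorem theorem1:
  fixes H :: "('x::finite \<Rightarrow> 'y::finite) set"
    and cost :: "'x \<Rightarrow> 'y \<Rightarrow> real"
    and f :: "('x \<times> 'y) set \<Rightarrow> real"
    and Q \<eta> \<alpha> :: real
    and A :: "('x, 'y) ialg"
  assumes "card (UNIV :: 'y set) \<ge> 2"
    and cost_pos: "\<And>x y. cost x y > 0"
    and f_nonneg: "\<And>S. f S \<ge> 0"
    and "Q > 0" and "\<eta> > 0"
    and "mono f" and "submodular f" and "f {} = 0"
    and gap: "\<And>S. f S \<ge> Q - \<eta> \<Longrightarrow> f S \<ge> Q"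
    and "\<alpha> \<ge> 1"
    and "approx_greedy H cost f Q \<alpha> A"
    and "learning_objective H f"
  shows "alg_cost H cost A
           \<le> ereal (r_cost cost * \<alpha> * (ln (Q / \<eta>) + 1)) * OPT H cost f Q"
  unfolding OPT_def
proof (rule le_ereal_mult_INF)
  show "r_cost cost * \<alpha> * (ln (Q / \<eta>) + 1) > 0"
    by (rule approximation_factor_pos[where cost = cost and f = f, OF assms(1) cost_pos assms(8,4,5)
          gap assms(10)])
  fix B assume "B \<in> {B. \<forall>h\<in>H. terminates B h \<and> Q \<le> f (collected B h)}"
  then show "alg_cost H cost A \<le> ereal (r_cost cost * \<alpha> * (ln (Q / \<eta>) + 1)) * alg_cost H cost B"
    using approx_greedy_competitive[where cost = cost, OF assms(1) cost_pos assms(6-8,4,5) gap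
        assms(10-12)] by blast
qed

end
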